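(* $\operatorname{add}(\mathcal{N})_{\mathrm{game}^*}^{\mathrm{II}} = \mathfrak{c}$. That is, if $\mathcal{A}\subseteq\omega^\omega$ and Player II has a winning strategy in the anti-localizing* game with respect to $\mathcal{A}$, then $|\mathcal{A}|=\mathfrak{c}$ (and such $\mathcal{A}$ of size $\mathfrak{c}$ exist).
   Context: For $k\in\omega$, $[\omega]^{k+1}$ denotes the set of subsets of $\omega$ of size $k+1$. For $\mathcal{A}\subseteq\omega^\omega$, the anti-localizing* game with respect to $\mathcal{A}$: at round $k$, Player I plays $a_k\in[\omega]^{k+1}$ and then Player II plays $n_k\in\omega$. Player II wins iff $\langle n_k:k\in\omega\rangle\in\mathcal{A}$ and $n_k\notin a_k$ for infinitely many $k$. $\operatorname{add}(\mathcal{N})_{\mathrm{game}^*}^{\mathrm{II}}$ is the least $|\mathcal{A}|$ such that Player II has a winning strategy in this game; $\mathfrak{c}=2^{\aleph_0}$. *)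

theory Defs
  imports Main "HOL-Library.Equipollence"
begin

definition legal_I :: "(nat \<Rightarrow> nat set) \<Rightarrow> bool" where
  "legal_I a \<longleftrightarrow> (\<forall>k. finite (a k) \<and> card (a k) = Suc k)"

definition play_II :: "(nat set list \<Rightarrow> nat) \<Rightarrow> (nat \<Rightarrow> nat set) \<Rightarrow> nat \<Rightarrow> nat" where
  "play_II \<sigma> a = (\<lambda>k. \<sigma> (map a [0..<Suc k]))"

definition II_wins :: "(nat \<Rightarrow> nat) set \<Rightarrow> (nat \<Rightarrow> nat set) \<Rightarrow> (nat \<Rightarrow> nat) \<Rightarrow> bool" where
  "II_wins A a n \<longleftrightarrow> n \<in> A \<and> infinite {k. n k \<notin> a k}"

definition winning_strategy_II :: "(nat \<Rightarrow> nat) set \<Rightarrow> (nat set list \<Rightarrow> nat) \<Rightarrow> bool" where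
  "winning_strategy_II A \<sigma> \<longleftrightarrow> (\<forall>a. legal_I a \<longrightarrow> II_wins A a (play_II \<sigma> a))"

end

theory Submission
  imports Defs
begin

text \<open>If Player II has a winning strategy \<sigma>, then below every legal position \<sigma> must give two
  different answers after two extensions of equal length: otherwise Player I could always play
  a set containing the one answer that \<sigma> gives, so from that point on II never escapes.
  Iterating this splitting yields a binary tree of positions whose 2^\<omega> branches are legal plays
  of Player I answered by pairwise different sequences in A, so the continuum injects into A.
  Conversely \<omega>^\<omega> injects into P(\<omega>) via graphs, and A = \<omega>^\<omega> is won by answering max a_k + 1.\<close>

definition legal_position :: "nat set list \<Rightarrow> bool" where
  "legal_position xs \<longleftrightarrow> (\<forall>i<length xs. finite (xs!i) \<and> card (xs!i) = Suc i)"

lemma legal_position_append_map: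
  assumes "legal_position p" and "\<And>i. length p \<le> i \<Longrightarrow> finite (f i) \<and> card (f i) = Suc i"
  shows "legal_position (p @ map f [length p..<j])"
  unfolding legal_position_def
proof (intro allI impI)
  fix i assume i: "i < length (p @ map f [length p..<j])"
  show "finite ((p @ map f [length p..<j]) ! i) \<and> card ((p @ map f [length p..<j]) ! i) = Suc i"
  proof (cases "i < length p")
    case True
    then show ?thesis using assms(1) by (simp add: nth_append legal_position_def)
  next
    case False
    then have "(p @ map f [length p..<j]) ! i = f i" using i by (simp add: nth_append)
    then show ?thesis using assms(2) False by simp
  qed
qed

definition cover_move :: "nat \<Rightarrow> nat \<Rightarrow> nat set" where
  "cover_move j m = (if m \<le> j then {0..j} else insert m {0..<j})"

lemma cover_move_legal: "finite (cover_move j m) \<and> card (cover_move j m) = Suc j"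
  by (auto simp: cover_move_def)

lemma mem_cover_move: "m \<in> cover_move j m"
  by (auto simp: cover_move_def)

lemma map_upt_split_prefix:
  assumes "\<And>i. i < length p \<Longrightarrow> a i = p ! i" and "length p \<le> j"
  shows "map a [0..<Suc j] = p @ map a [length p..<Suc j]"
proof -
  have "[0..<Suc j] = [0..<length p] @ [length p..<Suc j]"
    using assms(2) upt_add_eq_append[of 0 "length p" "Suc j - length p"] by simp
  moreover have "map a [0..<length p] = p"
    using assms(1) by (intro nth_equalityI) simp_all
  ultimately show ?thesis by simp
qed

definition splitting_pair ::
    "(nat set list \<Rightarrow> nat) \<Rightarrow> nat set list \<Rightarrow> nat set list \<Rightarrow> nat set list \<Rightarrow> bool" where
  "splitting_pair \<sigma> p q1 q2 \<longleftrightarrow> legal_position (p @ q1) \<and> legal_position (p @ q2) \<and>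
     length q1 = length q2 \<and> q1 \<noteq> [] \<and> \<sigma> (p @ q1) \<noteq> \<sigma> (p @ q2)"

text \<open>Player I copies p and then plays \<^const>\<open>cover_move\<close> against the answer \<sigma> gives to the
  canonical continuation by intervals; if \<sigma> ignored the continuation, that answer is the
  actual one, and II loses from round \<^term>\<open>length p\<close> on.\<close>
lemma winning_strategy_II_splits:
  assumes win: "winning_strategy_II A \<sigma>" and p: "legal_position p"
  shows "\<exists>q1 q2. splitting_pair \<sigma> p q1 q2"
proof (rule ccontr)
  assume "\<not> ?thesis"
  then have const: "\<sigma> (p @ q1) = \<sigma> (p @ q2)"
    if "legal_position (p @ q1)" "legal_position (p @ q2)" "length q1 = length q2" "q1 \<noteq> []"
    for q1 q2 using that unfolding splitting_pair_def by blast
  define L where "L = length p"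
  define m where "m j = \<sigma> (p @ map (\<lambda>i. {0..i}) [L..<Suc j])" for j
  define a where "a j = (if j < L then p ! j else cover_move j (m j))" for j
  have a_legal: "finite (a k) \<and> card (a k) = Suc k" for k
    using p cover_move_legal by (auto simp: a_def L_def legal_position_def)
  then have "legal_I a" by (simp add: legal_I_def)
  have play: "play_II \<sigma> a j = m j" if "L \<le> j" for j
  proof -
    have "play_II \<sigma> a j = \<sigma> (p @ map a [L..<Suc j])"
      using map_upt_split_prefix[of p a j] that by (simp add: play_II_def a_def L_def)
    also have "\<dots> = m j"
      unfolding m_def using that a_legal
      by (intro const legal_position_append_map[OF p, unfolded L_def[symmetric]]) auto
    finally show ?thesis .
  qed
  have "{k. play_II \<sigma> a k \<notin> a k} \<subseteq> {..<L}"
  proof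
    fix k assume "k \<in> {k. play_II \<sigma> a k \<notin> a k}"
    then show "k \<in> {..<L}"
      using play[of k] mem_cover_move[where j = k and m = "m k"] by (cases "k < L") (auto simp: a_def)
  qed
  then have "finite {k. play_II \<sigma> a k \<notin> a k}"
    using finite_subset by blast
  with win \<open>legal_I a\<close> show False
    unfolding winning_strategy_II_def II_wins_def by blast
qed

locale splitting_tree =
  fixes E :: "bool \<Rightarrow> nat set list \<Rightarrow> nat set list"
  assumes legal_extend: "legal_position p \<Longrightarrow> legal_position (p @ E c p)"
    and length_extend: "legal_position p \<Longrightarrow> length (E True p) = length (E False p)"
    and extend_nonempty: "legal_position p \<Longrightarrow> E c p \<noteq> []"
begin

primrec tree_node :: "(nat \<Rightarrow> bool) \<Rightarrow> nat \<Rightarrow> nat set list" where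
  "tree_node b 0 = []"
| "tree_node b (Suc n) = tree_node b n @ E (b n) (tree_node b n)"

lemma legal_tree_node: "legal_position (tree_node b n)"
proof (induction n)
  case (Suc n)
  then show ?case using legal_extend by simp
qed (simp add: legal_position_def)

lemma length_tree_node_ge: "n \<le> length (tree_node b n)"
proof (induction n)
  case (Suc n)
  then show ?case
    using extend_nonempty[OF legal_tree_node[of b n]] by (cases "E (b n) (tree_node b n)") auto
qed simp

lemma tree_node_prefix: "n \<le> m \<Longrightarrow> \<exists>r. tree_node b m = tree_node b n @ r"
  by (induction m rule: dec_induct) auto

lemma tree_node_cong: "\<forall>i<n. b i = b' i \<Longrightarrow> tree_node b n = tree_node b' n"
  by (induction n) auto

lemma length_tree_node_Suc_cong:
  "\<forall>i<n. b i = b' i \<Longrightarrow> length (tree_node b (Suc n)) = length (tree_node b' (Suc n))"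
  using tree_node_cong[of n b b'] length_extend[OF legal_tree_node, of b n]
  by (cases "b n"; cases "b' n") auto

definition branch :: "(nat \<Rightarrow> bool) \<Rightarrow> nat \<Rightarrow> nat set" where
  "branch b k = tree_node b (Suc k) ! k"

lemma branch_eq_nth: "k < length (tree_node b n) \<Longrightarrow> branch b k = tree_node b n ! k"
proof -
  assume k: "k < length (tree_node b n)"
  obtain r1 where r1: "tree_node b (max n (Suc k)) = tree_node b n @ r1"
    using tree_node_prefix[of n "max n (Suc k)" b] by auto
  obtain r2 where r2: "tree_node b (max n (Suc k)) = tree_node b (Suc k) @ r2"
    using tree_node_prefix[of "Suc k" "max n (Suc k)" b] by auto
  have "k < length (tree_node b (Suc k))"
    using length_tree_node_ge[of "Suc k" b] by simp
  then have "tree_node b (max n (Suc k)) ! k = branch b k"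
    unfolding branch_def r2 by (rule nth_append_left)
  moreover have "tree_node b (max n (Suc k)) ! k = tree_node b n ! k"
    unfolding r1 using k by (rule nth_append_left)
  ultimately show ?thesis by simp
qed

lemma legal_I_branch: "legal_I (branch b)"
  unfolding legal_I_def
proof
  fix k
  have "k < length (tree_node b (Suc k))"
    using length_tree_node_ge[of "Suc k" b] by simp
  then show "finite (branch b k) \<and> card (branch b k) = Suc k"
    using legal_tree_node[of b "Suc k"] unfolding legal_position_def branch_def by blast
qed

lemma map_branch_tree_node: "map (branch b) [0..<length (tree_node b n)] = tree_node b n"
  by (rule nth_equalityI) (simp_all add: branch_eq_nth)

lemma play_II_branch_at_node:
  assumes "0 < n"
  shows "play_II \<sigma> (branch b) (length (tree_node b n) - 1) = \<sigma> (tree_node b n)"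
proof -
  have "Suc (length (tree_node b n) - 1) = length (tree_node b n)"
    using length_tree_node_ge[of n b] assms by simp
  then show ?thesis
    unfolding play_II_def by (simp only: map_branch_tree_node)
qed

end

lemma lepoll_winning_set:
  assumes win: "winning_strategy_II A \<sigma>"
  shows "(UNIV :: nat set set) \<lesssim> A"
proof -
  define Q where "Q p = (SOME q. splitting_pair \<sigma> p (fst q) (snd q))" for p
  define E where "E c p = (if c then fst (Q p) else snd (Q p))" for c p
  have split: "splitting_pair \<sigma> p (E True p) (E False p)" if p: "legal_position p" for p
  proof -
    obtain q1 q2 where "splitting_pair \<sigma> p q1 q2"
      using winning_strategy_II_splits[OF win p] by blast
    then have "splitting_pair \<sigma> p (fst (q1, q2)) (snd (q1, q2))" by simp
    then have "splitting_pair \<sigma> p (fst (Q p)) (snd (Q p))"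
      unfolding Q_def by (rule someI)
    then show ?thesis
      by (simp add: E_def)
  qed
  interpret splitting_tree E
  proof
    fix p c assume "legal_position p"
    with split[of p] show "legal_position (p @ E c p)" "length (E True p) = length (E False p)"
        "E c p \<noteq> []"
      by (cases c; auto simp: splitting_pair_def)+
  qed
  have separate: "play_II \<sigma> (branch b) \<noteq> play_II \<sigma> (branch b')" if "b \<noteq> b'" for b b'
  proof -
    have "\<exists>n. b n \<noteq> b' n" using that by auto
    then obtain n where n: "b n \<noteq> b' n" "\<forall>i<n. b i = b' i"
      unfolding exists_least_iff[of "\<lambda>n. b n \<noteq> b' n"] by blast
    define p where "p = tree_node b n"
    have "tree_node b (Suc n) = p @ E (b n) p"
      by (simp add: p_def)
    moreover have "tree_node b' (Suc n) = p @ E (b' n) p"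
      using tree_node_cong[OF n(2)] by (simp add: p_def)
    moreover have "\<sigma> (p @ E True p) \<noteq> \<sigma> (p @ E False p)"
      using split[OF legal_tree_node[of b n]] by (simp add: splitting_pair_def p_def)
    ultimately have "\<sigma> (tree_node b (Suc n)) \<noteq> \<sigma> (tree_node b' (Suc n))"
      using n(1) by (cases "b n") auto
    moreover have "play_II \<sigma> (branch b) (length (tree_node b (Suc n)) - 1) = \<sigma> (tree_node b (Suc n))"
      by (rule play_II_branch_at_node) simp
    moreover have "play_II \<sigma> (branch b') (length (tree_node b (Suc n)) - 1) = \<sigma> (tree_node b' (Suc n))"
      unfolding length_tree_node_Suc_cong[OF n(2)] by (rule play_II_branch_at_node) simp
    ultimately show ?thesis by auto
  qed
  define F where "F S = play_II \<sigma> (branch (\<lambda>x. x \<in> S))" for S :: "nat set"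
  have "inj F"
  proof (rule injI)
    fix S T assume "F S = F T"
    then have "(\<lambda>x. x \<in> S) = (\<lambda>x. x \<in> T)"
      using separate[of "\<lambda>x. x \<in> S" "\<lambda>x. x \<in> T"] unfolding F_def by blast
    then show "S = T" by (simp add: set_eq_iff fun_eq_iff)
  qed
  moreover have "range F \<subseteq> A"
    using win legal_I_branch by (auto simp: winning_strategy_II_def II_wins_def F_def)
  ultimately show ?thesis
    unfolding lepoll_def by blast
qed

lemma nat_fun_lepoll_nat_set: "(UNIV :: (nat \<Rightarrow> nat) set) \<lesssim> (UNIV :: nat set set)"
proof -
  define graph where "graph f = range (\<lambda>i. prod_encode (i, f i))" for f :: "nat \<Rightarrow> nat"
  have "inj graph"
  proof (rule injI, rule ext)
    fix f g i assume "graph f = graph g"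
    then have "prod_encode (i, f i) \<in> graph g"
      unfolding graph_def by blast
    then obtain j where "prod_encode (i, f i) = prod_encode (j, g j)"
      unfolding graph_def by blast
    then show "f i = g i"
      by auto
  qed
  then show ?thesis
    unfolding lepoll_def by blast
qed

lemma winning_strategy_II_UNIV: "winning_strategy_II UNIV (\<lambda>xs. Suc (Max (last xs)))"
  unfolding winning_strategy_II_def II_wins_def
proof (intro allI impI conjI)
  fix a assume "legal_I a"
  then have finite: "finite (a k)" for k
    by (simp add: legal_I_def)
  have "Suc (Max (a k)) \<notin> a k" for k
    using Max_ge[OF finite[of k], of "Suc (Max (a k))"] by auto
  then have "{k. play_II (\<lambda>xs. Suc (Max (last xs))) a k \<notin> a k} = UNIV"
    by (simp add: play_II_def)
  then show "infinite {k. play_II (\<lambda>xs. Suc (Max (last xs))) a k \<notin> a k}"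
    by simp
qed simp

theorem mainTheorem11:
  shows "(\<forall>A :: (nat \<Rightarrow> nat) set. (\<exists>\<sigma>. winning_strategy_II A \<sigma>) \<longrightarrow> A \<approx> (UNIV :: nat set set))
       \<and> (\<exists>A :: (nat \<Rightarrow> nat) set. (\<exists>\<sigma>. winning_strategy_II A \<sigma>) \<and> A \<approx> (UNIV :: nat set set))"
proof -
  have "A \<approx> (UNIV :: nat set set)" if "winning_strategy_II A \<sigma>" for A :: "(nat \<Rightarrow> nat) set" and \<sigma>
  proof (rule lepoll_antisym)
    show "A \<lesssim> (UNIV :: nat set set)"
      using nat_fun_lepoll_nat_set lepoll_trans subset_imp_lepoll by blast
    show "(UNIV :: nat set set) \<lesssim> A"
      using that by (rule lepoll_winning_set)
  qed
  then show ?thesis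
    using winning_strategy_II_UNIV by blast
qed

end
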